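(* Let $\Lambda=T_1\sqcup\cdots\sqcup T_m$ be a partition of $\Lambda$ into pairwise disjoint tilings $T_1,\dots,T_m$. Then for every $S\subseteq\{1,\dots,m\}$, the set $T_S=\bigcup_{s\in S}T_s$ is a tiling.
   Context: Fix an integer $n\ge 3$ and write $[n]=\{1,\dots,n\}$. Let $\Lambda$ be the set of 3-element subsets of $[n]$; a triple $\{i,j,k\}$ with $i<j<k$ is written $ijk$. For a 4-element subset $F=\{i<j<k<l\}$ of $[n]$, the stick of $F$ is the sequence $(ijk,\ ijl,\ ikl,\ jkl)$. A tiling (the inversion set of a rhombus tiling of the zonogon $Z(n;2)$) is a subset $T\subseteq\Lambda$ such that for every 4-element $F\subseteq[n]$, $T\cap\mathrm{stick}(F)$ is an initial segment or a final segment of the stick (empty set and whole stick allowed). *)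

theory Defs
  imports Main
begin

definition Lambda :: "nat \<Rightarrow> nat set set" where
  "Lambda n = {X. X \<subseteq> {1..n} \<and> card X = 3}"

text \<open>Stick of a 4-set F = {i<j<k<l}: the list (ijk, ijl, ikl, jkl).\<close>
definition stick :: "nat set \<Rightarrow> nat set list" where
  "stick F = (let xs = sorted_list_of_set F in
     [F - {xs ! 3}, F - {xs ! 2}, F - {xs ! 1}, F - {xs ! 0}])"

definition is_tiling :: "nat \<Rightarrow> nat set set \<Rightarrow> bool" where
  "is_tiling n T \<longleftrightarrow> T \<subseteq> Lambda n \<and>
     (\<forall>F. F \<subseteq> {1..n} \<and> card F = 4 \<longrightarrow>
        (\<exists>p\<le>4. filter (\<lambda>t. t \<in> T) (stick F) = take p (stick F)
               \<or> filter (\<lambda>t. t \<in> T) (stick F) = drop p (stick F)))"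

end

theory Submission
  imports Defs
begin

text \<open>Since the tilings \<open>T\<^sub>i\<close> partition \<open>\<Lambda>\<close>, every stick is split into classes by the map
  sending a triple to the index of its tiling, and each class is an initial or a final segment of
  the stick. A nonempty initial segment contains the first triple and a nonempty final segment
  the last one, so at most two indices occur along the stick: the one of its first and the one of
  its last triple. Any union of classes is therefore empty, the whole stick, or a single class.\<close>

definition selects_end_segment :: "('a \<Rightarrow> bool) \<Rightarrow> 'a list \<Rightarrow> bool" where
  "selects_end_segment P xs \<longleftrightarrow> (\<exists>p. filter P xs = take p xs \<or> filter P xs = drop p xs)"

lemma selects_end_segment_bounded:
  "selects_end_segment P xs \<longleftrightarrow>
     (\<exists>p\<le>length xs. filter P xs = take p xs \<or> filter P xs = drop p xs)"
proof
  assume "selects_end_segment P xs"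
  then obtain p where "filter P xs = take p xs \<or> filter P xs = drop p xs"
    unfolding selects_end_segment_def by blast
  then show "\<exists>p\<le>length xs. filter P xs = take p xs \<or> filter P xs = drop p xs"
    by (intro exI[of _ "min p (length xs)"]) (auto simp: min_def)
qed (auto simp: selects_end_segment_def)

lemma selects_end_segment_cong:
  assumes "\<And>x. x \<in> set xs \<Longrightarrow> P x \<longleftrightarrow> Q x"
  shows "selects_end_segment P xs \<longleftrightarrow> selects_end_segment Q xs"
proof -
  have "filter P xs = filter Q xs"
    using assms by (rule filter_cong[OF refl])
  then show ?thesis unfolding selects_end_segment_def by simp
qed

lemma selects_end_segment_hd_or_last:
  assumes "selects_end_segment P xs" and "x \<in> set xs" and "P x"
  shows "P (hd xs) \<or> P (last xs)"
proof -
  have nonempty: "filter P xs \<noteq> []"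
    using assms(2,3) by (auto simp: filter_empty_conv)
  then have "P (hd (filter P xs))" and "P (last (filter P xs))"
    using hd_in_set[of "filter P xs"] last_in_set[of "filter P xs"] by auto
  moreover obtain p where "filter P xs = take p xs \<or> filter P xs = drop p xs"
    using assms(1) unfolding selects_end_segment_def by blast
  ultimately show ?thesis
    using nonempty by (metis drop_eq_Nil2 hd_take last_drop not_gr0 not_le take_eq_Nil)
qed

lemma selects_end_segment_preimage:
  assumes classes: "\<And>i. selects_end_segment (\<lambda>x. f x = i) xs"
  shows "selects_end_segment (\<lambda>x. f x \<in> S) xs"
proof -
  have two_values: "f x = f (hd xs) \<or> f x = f (last xs)" if "x \<in> set xs" for x
    using selects_end_segment_hd_or_last[OF classes that refl] by auto
  consider "f (hd xs) \<in> S" "f (last xs) \<in> S" | "f (hd xs) \<notin> S" "f (last xs) \<notin> S"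
    | "f (hd xs) \<in> S" "f (last xs) \<notin> S" | "f (hd xs) \<notin> S" "f (last xs) \<in> S"
    by blast
  then show ?thesis
  proof cases
    case 1
    then have "\<forall>x\<in>set xs. f x \<in> S"
      using two_values by metis
    then have "filter (\<lambda>x. f x \<in> S) xs = take (length xs) xs"
      by (simp add: filter_id_conv)
    then show ?thesis unfolding selects_end_segment_def by blast
  next
    case 2
    then have "\<forall>x\<in>set xs. f x \<notin> S"
      using two_values by metis
    then have "filter (\<lambda>x. f x \<in> S) xs = take 0 xs"
      by (simp add: filter_empty_conv)
    then show ?thesis unfolding selects_end_segment_def by blast
  next
    case 3
    then have "selects_end_segment (\<lambda>x. f x \<in> S) xs = selects_end_segment (\<lambda>x. f x = f (hd xs)) xs"
      using two_values by (intro selects_end_segment_cong) (metis 3)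
    then show ?thesis using classes by blast
  next
    case 4
    then have "selects_end_segment (\<lambda>x. f x \<in> S) xs = selects_end_segment (\<lambda>x. f x = f (last xs)) xs"
      using two_values by (intro selects_end_segment_cong) (metis 4)
    then show ?thesis using classes by blast
  qed
qed

lemma is_tiling_iff_selects_end_segment:
  "is_tiling n T \<longleftrightarrow> T \<subseteq> Lambda n \<and>
     (\<forall>F. F \<subseteq> {1..n} \<and> card F = 4 \<longrightarrow> selects_end_segment (\<lambda>t. t \<in> T) (stick F))"
proof -
  have "length (stick F) = 4" for F
    by (simp add: stick_def Let_def)
  then show ?thesis
    unfolding is_tiling_def selects_end_segment_bounded by presburger
qed

lemma is_tiling_empty: "is_tiling n {}"
  unfolding is_tiling_iff_selects_end_segment selects_end_segment_def
  by (auto intro: exI[of _ 0])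

lemma set_stick_subset_Lambda:
  assumes "F \<subseteq> {1..n}" and "card F = 4"
  shows "set (stick F) \<subseteq> Lambda n"
proof
  fix t assume t: "t \<in> set (stick F)"
  define xs where "xs = sorted_list_of_set F"
  have "finite F"
    using assms(2) by (metis card.infinite zero_neq_numeral)
  then have "length xs = 4" and "set xs = F"
    using assms(2) by (simp_all add: xs_def)
  then have "\<forall>k<4. xs ! k \<in> F"
    using nth_mem by metis
  moreover have "F - {x} \<in> Lambda n" if "x \<in> F" for x
    using that assms \<open>finite F\<close> by (auto simp: Lambda_def card_Diff_singleton)
  ultimately show "t \<in> Lambda n"
    using t by (auto simp: stick_def xs_def[symmetric])
qed

lemma is_tiling_preimage:
  assumes "\<And>i. is_tiling n {t \<in> Lambda n. f t = i}"
  shows "is_tiling n {t \<in> Lambda n. f t \<in> S}"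
  unfolding is_tiling_iff_selects_end_segment
proof (intro conjI allI impI)
  fix F assume F: "F \<subseteq> {1..n} \<and> card F = 4"
  then have in_Lambda: "set (stick F) \<subseteq> Lambda n"
    by (intro set_stick_subset_Lambda) simp_all
  have "selects_end_segment (\<lambda>t. f t = i) (stick F)" for i
  proof -
    have "selects_end_segment (\<lambda>t. t \<in> {t \<in> Lambda n. f t = i}) (stick F)"
      using assms F unfolding is_tiling_iff_selects_end_segment by blast
    then show ?thesis
      using in_Lambda by (subst (asm) selects_end_segment_cong) auto
  qed
  then have "selects_end_segment (\<lambda>t. f t \<in> S) (stick F)"
    by (rule selects_end_segment_preimage)
  then show "selects_end_segment (\<lambda>t. t \<in> {t \<in> Lambda n. f t \<in> S}) (stick F)"
    using in_Lambda by (subst selects_end_segment_cong) auto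
qed auto

lemma obtain_partition_index:
  assumes "\<And>i j. i \<in> I \<Longrightarrow> j \<in> I \<Longrightarrow> i \<noteq> j \<Longrightarrow> T i \<inter> T j = {}"
    and "(\<Union>i\<in>I. T i) = A"
  obtains g where "\<And>x. x \<in> A \<Longrightarrow> g x \<in> I" and "\<And>i. i \<in> I \<Longrightarrow> T i = {x \<in> A. g x = i}"
proof -
  obtain g where g: "\<And>x. x \<in> A \<Longrightarrow> g x \<in> I \<and> x \<in> T (g x)"
    using assms(2) by (metis UN_iff)
  have "T i = {x \<in> A. g x = i}" if "i \<in> I" for i
    using that g assms by blast
  with g that show ?thesis by blast
qed

theorem lemma2:
  fixes n m :: nat and T :: "nat \<Rightarrow> nat set set"
  assumes "n \<ge> 3"
    and tiles: "\<And>i. i \<in> {1..m} \<Longrightarrow> is_tiling n (T i)"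
    and disj: "\<And>i j. i \<in> {1..m} \<Longrightarrow> j \<in> {1..m} \<Longrightarrow> i \<noteq> j \<Longrightarrow> T i \<inter> T j = {}"
    and cover: "(\<Union>i\<in>{1..m}. T i) = Lambda n"
    and "S \<subseteq> {1..m}"
  shows "is_tiling n (\<Union>s\<in>S. T s)"
proof -
  obtain own where own: "\<And>t. t \<in> Lambda n \<Longrightarrow> own t \<in> {1..m}"
    and T_eq: "\<And>i. i \<in> {1..m} \<Longrightarrow> T i = {t \<in> Lambda n. own t = i}"
    using obtain_partition_index[OF disj cover] by blast
  have "is_tiling n {t \<in> Lambda n. own t = i}" for i
  proof (cases "i \<in> {1..m}")
    case False
    then have "{t \<in> Lambda n. own t = i} = {}" using own by blast
    then show ?thesis by (metis is_tiling_empty)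
  qed (use tiles T_eq in auto)
  moreover have "(\<Union>s\<in>S. T s) = {t \<in> Lambda n. own t \<in> S}"
    using T_eq own \<open>S \<subseteq> {1..m}\<close> by auto
  ultimately show ?thesis
    by (simp add: is_tiling_preimage)
qed

end
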